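(* Suppose the budget and utility parameters of users are drawn i.i.d. from a distribution $\mathcal{D}$ such that (i) for each good $j$, $\mathbb{P}_{\mathcal{D}}(u_j>0)>0$, and (ii) $\mathbf{u}\in[\underline{\mathbf{u}},\bar{\mathbf{u}}]$ and $w\in[\underline w,\bar w]$ with $\underline u,\underline w>0$. Then the price vectors $\mathbf{p}^t$ of the revealed preference algorithm described below remain strictly positive and bounded for all users $t\in[n]$ when $\gamma=\gamma_t=\bar D/\sqrt n$ for all $t\in[n]$, for some constant $\bar D>0$; that is, there are constants $0<\underline p\le\bar p$ with $\underline p\le p_j^t\le\bar p$ for all goods $j$ and all $t$.
   Context: Online Fisher market: $m$ divisible goods, good $j$ with capacity $c_j=nd_j$, $\mathbf{d}>\mathbf{0}$; $n$ users with $(w_t,\mathbf{u}_t)$ i.i.d. from $\mathcal{D}$. Given $\mathbf{p}^t$, user $t$ consumes an optimal solution $\mathbf{x}_t$ of $\max\mathbf{u}_t^\top\mathbf{x}$ s.t. $(\mathbf{p}^t)^\top\mathbf{x}\le w_t$, $\mathbf{x}\ge\mathbf{0}$. Revealed preference algorithm: initialize $\mathbf{p}^1>\mathbf{0}$; for $t=1,\dots,n$, user $t$ consumes $\mathbf{x}_t$ at price $\mathbf{p}^t$ and $\mathbf{p}^{t+1}=\mathbf{p}^t-\gamma_t(\mathbf{d}-\mathbf{x}_t)$ (no projection). The constants $\underline p,\bar p$ do not depend on $n$ or $t$. *)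

theory Defs
  imports "HOL-Probability.Probability"
begin

text \<open>Goods are indexed by j < m; vectors in R^m are functions nat => real
  (only the components j < m are meaningful).\<close>

definition budget_feasible :: "nat \<Rightarrow> (nat \<Rightarrow> real) \<Rightarrow> real \<Rightarrow> (nat \<Rightarrow> real) \<Rightarrow> bool" where
  "budget_feasible m p w y \<longleftrightarrow> (\<forall>j<m. 0 \<le> y j) \<and> (\<Sum>j<m. p j * y j) \<le> w"

definition optimal_consumption ::
  "nat \<Rightarrow> (nat \<Rightarrow> real) \<Rightarrow> real \<Rightarrow> (nat \<Rightarrow> real) \<Rightarrow> (nat \<Rightarrow> real) \<Rightarrow> bool" where
  "optimal_consumption m p w u x \<longleftrightarrow>
     budget_feasible m p w x \<and>
     (\<forall>y. budget_feasible m p w y \<longrightarrow> (\<Sum>j<m. u j * y j) \<le> (\<Sum>j<m. u j * x j))"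

text \<open>Users are indexed from 1 as in the paper.\<close>
definition rp_prefix ::
  "nat \<Rightarrow> (nat \<Rightarrow> real) \<Rightarrow> real \<Rightarrow> (nat \<Rightarrow> real) \<Rightarrow> (nat \<Rightarrow> real) \<Rightarrow> (nat \<Rightarrow> nat \<Rightarrow> real)
     \<Rightarrow> (nat \<Rightarrow> nat \<Rightarrow> real) \<Rightarrow> (nat \<Rightarrow> nat \<Rightarrow> real) \<Rightarrow> nat \<Rightarrow> bool" where
  "rp_prefix m d \<gamma> p1 W U x p k \<longleftrightarrow>
     (\<forall>j<m. p 1 j = p1 j) \<and>
     (\<forall>t\<in>{1..<k}. optimal_consumption m (p t) (W t) (U t) (x t) \<and>
                   (\<forall>j<m. p (Suc t) j = p t j - \<gamma> * (d j - x t j)))"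

end

theory Submission
  imports Defs
begin

text \<open>
  The prices are kept in a box by the invariant
  \<open>p\<^sub>j > 0\<close>, \<open>\<Sum>\<^sub>j 1 / p\<^sub>j \<le> B\<close>, \<open>p\<^sub>j \<le> p\<^sub>h\<close>,
  whose potential part bounds every price from below by \<open>1 / B\<close>.
  Let \<open>R\<close> bound the ratio of any two utilities of a user. For a step
  \<open>\<gamma> \<le> 1 / (8 B R\<^sup>2 \<Sum>\<^sub>j d\<^sub>j)\<close>, no price falls by more than half, and a
  price can only rise substantially when its good is over-bought, which a user
  with budget at most \<open>w\<^sub>h\<close> can do only if \<open>p\<^sub>j < w\<^sub>h / d\<^sub>j\<close>; this keeps
  \<open>p\<^sub>j \<le> p\<^sub>h\<close>. For the potential: an optimal user spends the whole budget,
  at least \<open>w / m\<close> of it on some good \<open>i\<close> of maximal utility per price, so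
  \<open>p\<^sub>i \<le> R p\<^sub>j\<close> for all \<open>j\<close>. If \<open>p\<^sub>i\<close> is large, all new prices are at
  least \<open>p\<^sub>i / (2R)\<close> and the potential is at most \<open>B\<close>. If \<open>p\<^sub>i\<close> is small,
  good \<open>i\<close> is bought far beyond its supply \<open>d\<^sub>i\<close>, and the drop of
  \<open>1 / p\<^sub>i\<close> outweighs the rise of the other \<open>1 / p\<^sub>j\<close>, which is only of
  order \<open>\<gamma> R\<^sup>2 \<Sum>\<^sub>j d\<^sub>j / p\<^sub>i\<^sup>2\<close>.
\<close>

section \<open>Optimal consumption\<close>

lemma sum_mult_add_indicator:
  fixes a x :: "nat \<Rightarrow> 'a::semiring_0"
  assumes "j < m"
  shows "(\<Sum>k<m. a k * (x k + (if k = j then c else 0))) = (\<Sum>k<m. a k * x k) + a j * c"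
proof -
  have "(\<Sum>k<m. a k * (x k + (if k = j then c else 0)))
      = (\<Sum>k<m. a k * x k + (if k = j then a k * c else 0))"
    by (rule sum.cong) (auto simp: distrib_left)
  also have "\<dots> = (\<Sum>k<m. a k * x k) + a j * c"
    using assms by (simp add: sum.distrib)
  finally show ?thesis .
qed

lemma optimal_consumption_spends_budget:
  assumes opt: "optimal_consumption m p w u x"
    and j: "j < m" "0 < p j" "0 < u j"
  shows "(\<Sum>k<m. p k * x k) = w"
proof (rule ccontr)
  assume "(\<Sum>k<m. p k * x k) \<noteq> w"
  moreover have x: "\<forall>k<m. 0 \<le> x k" "(\<Sum>k<m. p k * x k) \<le> w"
    using opt by (auto simp: optimal_consumption_def budget_feasible_def)
  ultimately have c: "0 < (w - (\<Sum>k<m. p k * x k)) / p j" (is "0 < ?c")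
    using j by simp
  define y where "y = (\<lambda>k. x k + (if k = j then ?c else 0))"
  have "(\<Sum>k<m. p k * y k) = w"
    unfolding y_def using j by (simp add: sum_mult_add_indicator)
  then have "budget_feasible m p w y"
    using x c by (auto simp: budget_feasible_def y_def)
  then have "(\<Sum>k<m. u k * y k) \<le> (\<Sum>k<m. u k * x k)"
    using opt by (auto simp: optimal_consumption_def)
  moreover have "0 < u j * ?c"
    using j c mult_pos_pos by blast
  ultimately show False
    unfolding y_def using j by (simp add: sum_mult_add_indicator)
qed

lemma optimal_consumption_bang_per_buck:
  assumes opt: "optimal_consumption m p w u x"
    and i: "i < m" "0 \<le> p i" "0 < x i"
    and j: "j < m" "0 < p j"
  shows "u j * p i \<le> u i * p j"
proof (rule ccontr)
  assume less: "\<not> u j * p i \<le> u i * p j"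
  then have "i \<noteq> j" by (auto simp: mult.commute)
  have x: "\<forall>k<m. 0 \<le> x k" "(\<Sum>k<m. p k * x k) \<le> w"
    using opt by (auto simp: optimal_consumption_def budget_feasible_def)
  \<comment> \<open>Exchange argument: move the money spent on good i to good j.\<close>
  define x' where "x' = (\<lambda>k. x k + (if k = i then - x i else 0))"
  define y where "y = (\<lambda>k. x' k + (if k = j then x i * p i / p j else 0))"
  have "(\<Sum>k<m. p k * y k) = (\<Sum>k<m. p k * x k)"
    unfolding y_def x'_def using i j by (simp add: sum_mult_add_indicator)
  moreover have "\<forall>k<m. 0 \<le> y k"
    using x i j \<open>i \<noteq> j\<close> by (auto simp: y_def x'_def)
  ultimately have "budget_feasible m p w y"
    using x by (simp add: budget_feasible_def)
  then have "(\<Sum>k<m. u k * y k) \<le> (\<Sum>k<m. u k * x k)"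
    using opt by (auto simp: optimal_consumption_def)
  then have "u j * (x i * p i / p j) \<le> u i * x i"
    unfolding y_def x'_def using i j by (simp add: sum_mult_add_indicator)
  then have "x i * (u j * p i) \<le> x i * (u i * p j)"
    using j by (simp add: field_simps)
  then show False
    using less i by simp
qed

lemma optimal_consumption_price_ratio:
  assumes opt: "optimal_consumption m p w u x"
    and p: "\<forall>j<m. 0 < p j" and u: "\<forall>j<m. 0 < u j" "\<forall>i<m. \<forall>j<m. u i \<le> R * u j"
    and i: "i < m" "0 < x i" and j: "j < m"
  shows "p i \<le> R * p j"
proof -
  have "u j * p i \<le> u i * p j"
    using optimal_consumption_bang_per_buck[OF opt] i j p by (simp add: less_imp_le)
  also have "\<dots> \<le> R * u j * p j"
    using u i j p by (simp add: mult_right_mono less_imp_le)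
  finally show ?thesis
    using u j by (simp add: mult.left_commute)
qed

lemma ex_ge_average:
  fixes f :: "nat \<Rightarrow> 'a::linordered_field"
  assumes "0 < m"
  shows "\<exists>i<m. (\<Sum>j<m. f j) / of_nat m \<le> f i"
proof (rule ccontr)
  assume "\<not> (\<exists>i<m. (\<Sum>j<m. f j) / of_nat m \<le> f i)"
  then have "(\<Sum>j<m. f j) < of_nat m * ((\<Sum>j<m. f j) / of_nat m)"
    using assms sum_bounded_above_strict[of "{..<m}" f "(\<Sum>j<m. f j) / of_nat m"] by (simp add: not_le)
  then show False
    using assms by simp
qed

section \<open>Effect of one price update\<close>

lemma price_update_le_max:
  fixes q d x \<gamma> wh B :: real
  assumes "0 < d" "0 \<le> \<gamma>" "0 \<le> x" "0 < q" "q * x \<le> wh" "1 / q \<le> B"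
  shows "q - \<gamma> * (d - x) \<le> max q (wh / d + \<gamma> * wh * B)"
proof (cases "x \<le> d")
  case True
  then have "0 \<le> \<gamma> * (d - x)"
    using assms by simp
  then show ?thesis
    by (simp add: le_max_iff_disj)
next
  case False
  have "q * d < q * x"
    using False \<open>0 < q\<close> by simp
  then have "q * d < wh"
    using assms by linarith
  then have "q < wh / d"
    using assms by (simp add: pos_less_divide_eq)
  have "0 \<le> q * x"
    using assms by simp
  then have "0 \<le> wh"
    using assms by linarith
  have "x \<le> wh * (1 / q)"
    using assms by (simp add: pos_le_divide_eq mult.commute)
  also have "\<dots> \<le> wh * B"
    using \<open>1 / q \<le> B\<close> \<open>0 \<le> wh\<close> by (rule mult_left_mono)
  finally have "\<gamma> * x \<le> \<gamma> * (wh * B)"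
    using \<open>0 \<le> \<gamma>\<close> by (rule mult_left_mono)
  moreover have "0 \<le> \<gamma> * d"
    using assms by simp
  ultimately show ?thesis
    using \<open>q < wh / d\<close> by (simp add: le_max_iff_disj algebra_simps)
qed

lemma inverse_price_update_le:
  fixes q q' d x \<gamma> P R :: real
  assumes "0 < q" "q / 2 \<le> q'" "q' = q - \<gamma> * (d - x)"
    and "0 \<le> \<gamma>" "0 \<le> x" "0 \<le> d"
    and P: "0 < P" "P \<le> R * q"
  shows "1 / q' - 1 / q \<le> 2 * \<gamma> * R^2 * d / P^2"
proof -
  have "0 < q'" "0 \<le> \<gamma> * d"
    using assms by auto
  have "1 / q' - 1 / q = \<gamma> * (d - x) / (q * q')"
    using assms \<open>0 < q'\<close> by (simp add: field_simps)
  also have "\<dots> \<le> \<gamma> * d / (q * q')"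
    using assms \<open>0 < q'\<close> by (intro divide_right_mono) (auto simp: algebra_simps)
  also have "\<dots> \<le> \<gamma> * d / (q * (q / 2))"
    using assms \<open>0 \<le> \<gamma> * d\<close> by (intro divide_left_mono mult_left_mono) auto
  also have "\<dots> = 2 * \<gamma> * d / q^2"
    by (simp add: power2_eq_square)
  also have "\<dots> \<le> 2 * \<gamma> * d / (P / R)^2"
  proof (intro divide_left_mono)
    have "0 < R * q"
      using P by linarith
    then have "0 < R"
      using \<open>0 < q\<close> by (simp add: zero_less_mult_iff)
    then have "0 < P / R" "P / R \<le> q"
      using P by (auto simp: field_simps)
    then show "(P / R)^2 \<le> q^2"
      by (simp add: power_mono)
    show "0 < q^2 * (P / R)^2"
      using \<open>0 < P / R\<close> \<open>0 < q\<close> by (intro mult_pos_pos zero_less_power)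
  qed (use \<open>0 \<le> \<gamma> * d\<close> in simp)
  also have "\<dots> = 2 * \<gamma> * R^2 * d / P^2"
    by (simp add: power_divide)
  finally show ?thesis .
qed

lemma inverse_add_le:
  fixes P K \<Delta> :: real
  assumes "0 < P" "0 \<le> K" "2 * K \<le> P" "2 * K \<le> \<Delta>"
  shows "1 / (P + \<Delta>) \<le> 1 / P - K / P^2"
proof -
  have "2 * K * P \<le> \<Delta> * P"
    using assms by (intro mult_right_mono) auto
  moreover have "2 * K * \<Delta> \<le> P * \<Delta>"
    using assms by (intro mult_right_mono) auto
  ultimately have "K * (P + \<Delta>) \<le> \<Delta> * P"
    by (simp add: algebra_simps)
  then show ?thesis
    using assms by (simp add: field_simps power2_eq_square)
qed

lemma sum_inverse_le_if_ge:
  fixes q :: "nat \<Rightarrow> real"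
  assumes "0 < c" "\<forall>j<m. c \<le> q j"
  shows "(\<Sum>j<m. 1 / q j) \<le> real m / c"
proof -
  have "1 / q j \<le> 1 / c" if "j < m" for j
    using assms that by (intro divide_left_mono) auto
  then have "(\<Sum>j<m. 1 / q j) \<le> real (card {..<m}) * (1 / c)"
    by (intro sum_bounded_above) auto
  then show ?thesis
    by simp
qed

lemma sum_inverse_le_if_price_large:
  fixes q q' :: "nat \<Rightarrow> real"
  assumes "0 < m" "0 < B" "0 < R"
    and ratio: "\<forall>j<m. q i \<le> R * q j" and half: "\<forall>j<m. q j / 2 \<le> q' j"
    and large: "2 * real m * R / B \<le> q i"
  shows "(\<Sum>j<m. 1 / q' j) \<le> B"
proof -
  have "real m / B \<le> q' j" if "j < m" for j
  proof -
    have "2 * real m * R / B \<le> R * q j"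
      using large ratio that by force
    then have "real m / B \<le> q j / 2"
      using assms by (simp add: field_simps)
    then show ?thesis
      using half that order_trans by blast
  qed
  then have "(\<Sum>j<m. 1 / q' j) \<le> real m / (real m / B)"
    using assms by (intro sum_inverse_le_if_ge) auto
  then show ?thesis
    using assms by simp
qed

lemma sum_inverse_price_update_others_le:
  fixes q q' x d :: "nat \<Rightarrow> real"
  assumes i: "i < m"
    and q: "\<forall>j<m. 0 < q j" "\<forall>j<m. q j / 2 \<le> q' j"
    and update: "\<forall>j<m. q' j = q j - \<gamma> * (d j - x j)"
    and nonneg: "0 \<le> \<gamma>" "\<forall>j<m. 0 \<le> x j" "\<forall>j<m. 0 \<le> d j"
    and ratio: "\<forall>j<m. q i \<le> R * q j"
  shows "(\<Sum>j\<in>{..<m} - {i}. 1 / q' j - 1 / q j) \<le> 2 * \<gamma> * R^2 * (\<Sum>j<m. d j) / (q i)^2"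
proof -
  have "1 / q' j - 1 / q j \<le> 2 * \<gamma> * R^2 * d j / (q i)^2" if "j < m" for j
    by (rule inverse_price_update_le[where x = "x j"]) (use assms that in auto)
  then have "(\<Sum>j\<in>{..<m} - {i}. 1 / q' j - 1 / q j)
      \<le> (\<Sum>j\<in>{..<m} - {i}. 2 * \<gamma> * R^2 * d j / (q i)^2)"
    by (intro sum_mono) auto
  also have "\<dots> \<le> (\<Sum>j<m. 2 * \<gamma> * R^2 * d j / (q i)^2)"
    using nonneg by (intro sum_mono2) auto
  also have "\<dots> = 2 * \<gamma> * R^2 * (\<Sum>j<m. d j) / (q i)^2"
    by (simp add: sum_divide_distrib sum_distrib_left)
  finally show ?thesis .
qed

lemma sum_inverse_price_update_le:
  fixes q q' x d :: "nat \<Rightarrow> real"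
  assumes i: "i < m"
    and q: "\<forall>j<m. 0 < q j" "\<forall>j<m. q j / 2 \<le> q' j"
    and update: "\<forall>j<m. q' j = q j - \<gamma> * (d j - x j)"
    and nonneg: "0 \<le> \<gamma>" "\<forall>j<m. 0 \<le> x j" "\<forall>j<m. 0 \<le> d j"
    and ratio: "\<forall>j<m. q i \<le> R * q j"
    and demand: "d i + 4 * R^2 * (\<Sum>j<m. d j) \<le> x i"
    and small_step: "8 * \<gamma> * R^2 * (\<Sum>j<m. d j) \<le> q i"
  shows "(\<Sum>j<m. 1 / q' j) \<le> (\<Sum>j<m. 1 / q j)"
proof -
  define S where "S = (\<Sum>j<m. d j)"
  define K where "K = 2 * \<gamma> * R^2 * S"
  define \<Delta> where "\<Delta> = \<gamma> * (x i - d i)"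
  have "0 < q i"
    using q i by simp
  have "0 \<le> S"
    unfolding S_def using nonneg by (intro sum_nonneg) auto
  then have "0 \<le> K"
    using nonneg by (simp add: K_def)
  have others: "(\<Sum>j\<in>{..<m} - {i}. 1 / q' j - 1 / q j) \<le> K / (q i)^2"
    using sum_inverse_price_update_others_le[OF i q update nonneg ratio] by (simp add: K_def S_def)
  \<comment> \<open>The price of the over-demanded good i rises enough to pay for the others.\<close>
  have "2 * K = \<gamma> * (4 * R^2 * S)"
    by (simp add: K_def)
  also have "\<dots> \<le> \<Delta>"
    unfolding \<Delta>_def using demand nonneg(1) by (intro mult_left_mono) (auto simp: S_def)
  finally have "2 * K \<le> \<Delta>" .
  moreover have "8 * \<gamma> * R^2 * S = 4 * K"
    by (simp add: K_def)
  then have "2 * K \<le> q i"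
    using small_step[folded S_def] \<open>0 \<le> K\<close> by linarith
  moreover have "q' i = q i + \<Delta>"
    using update i by (simp add: \<Delta>_def algebra_simps)
  ultimately have "1 / q' i - 1 / q i \<le> - (K / (q i)^2)"
    using inverse_add_le[of "q i" K \<Delta>] \<open>0 < q i\<close> \<open>0 \<le> K\<close> by simp
  have "(\<Sum>j<m. 1 / q' j) - (\<Sum>j<m. 1 / q j)
      = (1 / q' i - 1 / q i) + (\<Sum>j\<in>{..<m} - {i}. 1 / q' j - 1 / q j)"
    using i by (simp add: sum_subtractf[symmetric] sum.remove)
  also have "\<dots> \<le> 0"
    using \<open>1 / q' i - 1 / q i \<le> - (K / (q i)^2)\<close> others by simp
  finally show ?thesis
    by simp
qed

section \<open>Invariant of the price dynamics\<close>

definition price_bounds :: "nat \<Rightarrow> real \<Rightarrow> real \<Rightarrow> (nat \<Rightarrow> real) \<Rightarrow> bool" where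
  "price_bounds m B ph q \<longleftrightarrow> (\<forall>j<m. 0 < q j) \<and> (\<Sum>j<m. 1 / q j) \<le> B \<and> (\<forall>j<m. q j \<le> ph)"

lemma price_bounds_imp_ge:
  assumes "price_bounds m B ph q" "j < m"
  shows "1 / B \<le> q j"
proof -
  have "0 < q j" "\<forall>k<m. 0 < q k"
    using assms by (auto simp: price_bounds_def)
  then have "1 / q j \<le> (\<Sum>k<m. 1 / q k)"
    using assms by (intro member_le_sum) (auto simp: less_imp_le)
  then have "1 / q j \<le> B"
    using assms by (simp add: price_bounds_def)
  then have "inverse B \<le> inverse (1 / q j)"
    using \<open>0 < q j\<close> by (intro le_imp_inverse_le) auto
  then show ?thesis
    by (simp add: inverse_eq_divide)
qed

lemma price_bounds_inverse_bound:
  assumes "price_bounds m B ph q" "0 < m"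
  shows "0 < 1 / B" "1 / B \<le> ph"
proof -
  have "0 < q 0" "q 0 \<le> ph"
    using assms by (auto simp: price_bounds_def)
  moreover have "1 / B \<le> q 0"
    using price_bounds_imp_ge assms by blast
  moreover have "1 / q 0 \<le> (\<Sum>k<m. 1 / q k)"
    using assms by (intro member_le_sum) (auto simp: price_bounds_def less_imp_le)
  moreover have "(\<Sum>k<m. 1 / q k) \<le> B"
    using assms by (simp add: price_bounds_def)
  ultimately have "0 < B"
    using divide_pos_pos[of 1 "q 0"] by linarith
  then show "0 < 1 / B"
    by simp
  show "1 / B \<le> ph"
    using \<open>1 / B \<le> q 0\<close> \<open>q 0 \<le> ph\<close> by linarith
qed

lemma AE_PiM_all_components:
  assumes "prob_space M" "finite I" "AE x in M. P x"
  shows "AE \<omega> in PiM I (\<lambda>_. M). \<forall>i\<in>I. P (\<omega> i)"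
  using assms by (intro AE_finite_allI AE_PiM_component) auto

text \<open>\<open>R\<close> bounds the utility ratios and \<open>[wl, wh]\<close> the budgets of all users.\<close>

locale price_step_parameters =
  fixes m :: nat and d :: "nat \<Rightarrow> real" and R wl wh B \<gamma> ph :: real
  assumes m_pos: "0 < m"
    and d_pos: "\<forall>j<m. 0 < d j"
    and R_ge_1: "1 \<le> R"
    and wl_pos: "0 < wl"
    and B_large: "2 * real m ^ 2 * R * (1 + 4 * R^2) * (\<Sum>j<m. d j) \<le> wl * B"
    and step_nonneg: "0 \<le> \<gamma>"
    and step_small: "8 * \<gamma> * B * R^2 * (\<Sum>j<m. d j) \<le> 1"
    and ph_large: "\<forall>j<m. wh / d j + \<gamma> * wh * B \<le> ph"
begin

lemma sum_d_pos: "0 < (\<Sum>j<m. d j)"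
  using m_pos d_pos by (intro sum_pos) auto

lemma B_pos: "0 < B"
proof -
  have "0 < 2 * real m ^ 2 * R * (1 + 4 * R^2) * (\<Sum>j<m. d j)"
    using m_pos R_ge_1 sum_d_pos by (simp add: add_pos_nonneg)
  then have "0 < wl * B"
    using B_large by linarith
  then show ?thesis
    using wl_pos by (simp add: zero_less_mult_iff)
qed

lemma step_le_price:
  assumes "price_bounds m B ph q" "j < m"
  shows "8 * \<gamma> * R^2 * (\<Sum>k<m. d k) \<le> q j"
proof -
  have "8 * \<gamma> * R^2 * (\<Sum>k<m. d k) \<le> 1 / B"
    using step_small B_pos by (simp add: field_simps)
  then show ?thesis
    using price_bounds_imp_ge[OF assms] by linarith
qed

lemma half_price_le_update:
  assumes q: "price_bounds m B ph q"
    and x: "\<forall>j<m. 0 \<le> x j"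
    and update: "\<forall>j<m. q' j = q j - \<gamma> * (d j - x j)"
    and j: "j < m"
  shows "q j / 2 \<le> q' j"
proof -
  define S where "S = (\<Sum>k<m. d k)"
  have "d j \<le> S"
    unfolding S_def using d_pos j by (intro member_le_sum) (auto simp: less_imp_le)
  moreover have "8 * S * 1 \<le> 8 * S * R^2"
    using R_ge_1 sum_d_pos by (intro mult_left_mono) (auto simp: S_def one_le_power)
  ultimately have "2 * d j \<le> 8 * S * R^2"
    using sum_d_pos[folded S_def] by linarith
  then have "\<gamma> * (2 * d j) \<le> \<gamma> * (8 * S * R^2)"
    using step_nonneg by (rule mult_left_mono)
  then have "2 * (\<gamma> * d j) \<le> 8 * \<gamma> * R^2 * (\<Sum>k<m. d k)"
    by (simp add: S_def algebra_simps)
  also have "\<dots> \<le> q j"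
    using step_le_price[OF q j] .
  moreover have "q' j = q j - \<gamma> * d j + \<gamma> * x j"
    using update j by (simp add: algebra_simps)
  moreover have "0 \<le> \<gamma> * x j"
    using x j step_nonneg by simp
  ultimately show ?thesis
    by linarith
qed

lemma cheap_good_over_demanded:
  assumes w: "wl \<le> w" and i: "i < m" "w / m \<le> q i * x i" "0 \<le> x i"
    and cheap: "q i < 2 * real m * R / B"
  shows "d i + 4 * R^2 * (\<Sum>j<m. d j) \<le> x i"
proof -
  define S where "S = (\<Sum>j<m. d j)"
  have "2 * real m ^ 2 * R * ((1 + 4 * R^2) * S) \<le> wl * B"
    using B_large by (simp add: S_def mult.assoc)
  also have "\<dots> \<le> real m * (q i * x i) * B"
    using w i m_pos B_pos by (simp add: field_simps)
  also have "\<dots> = real m * x i * (q i * B)"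
    by simp
  also have "\<dots> \<le> real m * x i * (2 * real m * R)"
    using cheap B_pos i by (intro mult_left_mono) (auto simp: field_simps)
  also have "\<dots> = 2 * real m ^ 2 * R * x i"
    by (simp add: power2_eq_square)
  finally have "(1 + 4 * R^2) * S \<le> x i"
    using m_pos R_ge_1 by simp
  moreover have "d i \<le> S"
    unfolding S_def using d_pos i by (intro member_le_sum) (auto simp: less_imp_le)
  ultimately show ?thesis
    by (simp add: S_def algebra_simps)
qed

lemma potential_update_le:
  assumes q: "price_bounds m B ph q"
    and opt: "optimal_consumption m q w u x"
    and w: "wl \<le> w"
    and u: "\<forall>j<m. 0 < u j" "\<forall>i<m. \<forall>j<m. u i \<le> R * u j"
    and update: "\<forall>j<m. q' j = q j - \<gamma> * (d j - x j)"
  shows "(\<Sum>j<m. 1 / q' j) \<le> B"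
proof -
  have q_pos: "\<forall>j<m. 0 < q j"
    using q by (simp add: price_bounds_def)
  have x: "\<forall>j<m. 0 \<le> x j"
    using opt by (simp add: optimal_consumption_def budget_feasible_def)
  have half: "\<forall>j<m. q j / 2 \<le> q' j"
    using half_price_le_update[OF q x update] by blast
  obtain i where i: "i < m" "w / m \<le> q i * x i"
    using ex_ge_average[OF m_pos, of "\<lambda>j. q j * x j"]
      optimal_consumption_spends_budget[OF opt, of 0] m_pos q_pos u by auto
  have "0 < w / m"
    using w wl_pos m_pos by simp
  then have "0 < q i * x i"
    using i by linarith
  then have "0 < x i"
    using q_pos[rule_format, OF i(1)] by (simp add: zero_less_mult_iff)
  have ratio: "\<forall>j<m. q i \<le> R * q j"
    using optimal_consumption_price_ratio[OF opt q_pos u i(1) \<open>0 < x i\<close>] by blast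
  show ?thesis
  proof (cases "2 * real m * R / B \<le> q i")
    case True
    then show ?thesis
      using sum_inverse_le_if_price_large[OF m_pos B_pos _ ratio half] R_ge_1 by simp
  next
    case False
    then have "d i + 4 * R^2 * (\<Sum>j<m. d j) \<le> x i"
      using cheap_good_over_demanded[where q = q and x = x, OF w i] x i(1) by (simp add: not_le)
    then have "(\<Sum>j<m. 1 / q' j) \<le> (\<Sum>j<m. 1 / q j)"
      using sum_inverse_price_update_le[OF i(1) q_pos half update step_nonneg x _ ratio]
        d_pos step_le_price[OF q i(1)] by (simp add: less_imp_le)
    then show ?thesis
      using q by (simp add: price_bounds_def)
  qed
qed

lemma price_update_bounds:
  assumes q: "price_bounds m B ph q"
    and opt: "optimal_consumption m q w u x"
    and w: "wl \<le> w" "w \<le> wh"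
    and u: "\<forall>j<m. 0 < u j" "\<forall>i<m. \<forall>j<m. u i \<le> R * u j"
    and update: "\<forall>j<m. q' j = q j - \<gamma> * (d j - x j)"
  shows "price_bounds m B ph q'"
proof -
  have q_pos: "\<forall>j<m. 0 < q j" and q_le: "\<forall>j<m. q j \<le> ph"
    using q by (simp_all add: price_bounds_def)
  have x: "\<forall>j<m. 0 \<le> x j"
    using opt by (simp add: optimal_consumption_def budget_feasible_def)
  have spend: "(\<Sum>j<m. q j * x j) = w"
    using optimal_consumption_spends_budget[OF opt, of 0] m_pos q_pos u by simp
  have "q' j \<le> ph" if j: "j < m" for j
  proof -
    have "q j * x j \<le> (\<Sum>k<m. q k * x k)"
      using q_pos x j by (intro member_le_sum) (auto simp: less_imp_le)
    then have "q j * x j \<le> wh"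
      using spend w by simp
    moreover have "1 / q j \<le> B"
      using price_bounds_imp_ge[OF q j] B_pos q_pos j by (simp add: field_simps)
    moreover have "0 < d j" "0 \<le> x j" "0 < q j"
      using d_pos x q_pos j by auto
    ultimately have "q j - \<gamma> * (d j - x j) \<le> max (q j) (wh / d j + \<gamma> * wh * B)"
      using step_nonneg by (intro price_update_le_max)
    moreover have "q j \<le> ph" "wh / d j + \<gamma> * wh * B \<le> ph" "q' j = q j - \<gamma> * (d j - x j)"
      using q_le ph_large update j by auto
    ultimately show ?thesis
      by (metis max.bounded_iff order_trans)
  qed
  moreover have "0 < q' j" if "j < m" for j
    using half_price_le_update[OF q x update that] q_pos that by fastforce
  ultimately show ?thesis
    using potential_update_le[OF q opt w(1) u update] by (simp add: price_bounds_def)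
qed

lemma price_bounds_run:
  assumes run: "rp_prefix m d \<gamma> p1 W U x p k"
    and init: "price_bounds m B ph p1"
    and users: "\<forall>t\<in>{1..<k}. wl \<le> W t \<and> W t \<le> wh \<and> (\<forall>j<m. 0 < U t j) \<and>
                               (\<forall>i<m. \<forall>j<m. U t i \<le> R * U t j)"
    and "1 \<le> t" "t \<le> k"
  shows "price_bounds m B ph (p t)"
  using \<open>1 \<le> t\<close> \<open>t \<le> k\<close>
proof (induction t rule: nat_induct_at_least)
  case base
  have "\<forall>j<m. p 1 j = p1 j"
    using run by (simp add: rp_prefix_def)
  then show ?case
    using init by (simp add: price_bounds_def)
next
  case (Suc t)
  then have t: "t \<in> {1..<k}"
    by simp
  then have "optimal_consumption m (p t) (W t) (U t) (x t)"
    and "\<forall>j<m. p (Suc t) j = p t j - \<gamma> * (d j - x t j)"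
    using run by (auto simp: rp_prefix_def)
  moreover have "wl \<le> W t" "W t \<le> wh" "\<forall>j<m. 0 < U t j" "\<forall>i<m. \<forall>j<m. U t i \<le> R * U t j"
    using users t by auto
  moreover have "price_bounds m B ph (p t)"
    using Suc by simp
  ultimately show ?case
    using price_update_bounds by blast
qed

lemma AE_price_bounds:
  fixes D :: "(real \<times> (nat \<Rightarrow> real)) measure"
  assumes "prob_space D"
    and users: "AE z in D. wl \<le> fst z \<and> fst z \<le> wh \<and> (\<forall>j<m. 0 < snd z j) \<and>
                             (\<forall>i<m. \<forall>j<m. snd z i \<le> R * snd z j)"
    and init: "price_bounds m B ph p1"
  shows "AE \<omega> in PiM {1..n} (\<lambda>_. D). \<forall>k\<in>{1..n}. \<forall>x p.
           rp_prefix m d \<gamma> p1 (\<lambda>t. fst (\<omega> t)) (\<lambda>t. snd (\<omega> t)) x p k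
           \<longrightarrow> (\<forall>j<m. 1 / B \<le> p k j \<and> p k j \<le> ph)"
  using AE_PiM_all_components[OF assms(1) finite_atLeastAtMost users]
proof eventually_elim
  case (elim \<omega>)
  show ?case
  proof (intro ballI allI impI)
    fix k x p j
    assume "k \<in> {1..n}" and run: "rp_prefix m d \<gamma> p1 (\<lambda>t. fst (\<omega> t)) (\<lambda>t. snd (\<omega> t)) x p k"
      and "j < m"
    have "price_bounds m B ph (p k)"
      by (rule price_bounds_run[OF run init]) (use elim \<open>k \<in> {1..n}\<close> in auto)
    then show "1 / B \<le> p k j \<and> p k j \<le> ph"
      using price_bounds_imp_ge \<open>j < m\<close> by (auto simp: price_bounds_def)
  qed
qed

end

section \<open>Choice of the constants\<close>

lemma price_step_parameters_if_small_step:
  assumes m: "0 < m" and d: "\<forall>j<m. 0 < d j" and R: "1 \<le> R" and w: "0 < wl" "0 \<le> wh"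
    and B: "2 * real m ^ 2 * R * (1 + 4 * R^2) * (\<Sum>j<m. d j) \<le> wl * B"
    and ph: "\<forall>j<m. wh / d j + wh / (8 * R^2 * (\<Sum>j<m. d j)) \<le> ph"
    and \<gamma>: "0 \<le> \<gamma>" "\<gamma> \<le> 1 / (8 * B * R^2 * (\<Sum>j<m. d j))"
  shows "price_step_parameters m d R wl wh B \<gamma> ph"
proof
  define S where "S = (\<Sum>j<m. d j)"
  have "0 < S"
    unfolding S_def using m d by (intro sum_pos) auto
  moreover have "0 < 2 * real m ^ 2 * R * (1 + 4 * R^2) * S"
    using m R \<open>0 < S\<close> by (simp add: add_pos_nonneg)
  then have "0 < wl * B"
    using B[folded S_def] by linarith
  then have "0 < B"
    using w by (simp add: zero_less_mult_iff)
  then have "0 < 8 * B * R^2 * S"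
    using R \<open>0 < S\<close> by simp
  then have "\<gamma> * (8 * B * R^2 * S) \<le> 1"
    using \<gamma> by (simp add: S_def field_simps)
  then show "8 * \<gamma> * B * R^2 * (\<Sum>j<m. d j) \<le> 1"
    by (simp add: S_def algebra_simps)
  have "\<gamma> * (wh * B) \<le> 1 / (8 * B * R^2 * S) * (wh * B)"
    using \<gamma>(2) w(2) \<open>0 < B\<close> by (intro mult_right_mono) (auto simp: S_def)
  moreover have "1 / (8 * B * R^2 * S) * (wh * B) = wh / (8 * R^2 * S)"
    using \<open>0 < B\<close> \<open>0 < S\<close> R by (simp add: field_simps)
  ultimately have "\<gamma> * wh * B \<le> wh / (8 * R^2 * S)"
    by (simp add: mult.assoc)
  then show "\<forall>j<m. wh / d j + \<gamma> * wh * B \<le> ph"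
    using ph by (fastforce simp: S_def)
qed (use assms in auto)

lemma exists_price_step_parameters:
  assumes m: "0 < m" and d: "\<forall>j<m. 0 < d j" and p1: "\<forall>j<m. 0 < p1 j"
    and R: "1 \<le> R" and w: "0 < wl" "0 \<le> wh"
  obtains Dbar B ph where "0 < Dbar" "price_bounds m B ph p1"
    "\<forall>\<gamma>. 0 \<le> \<gamma> \<and> \<gamma> \<le> Dbar \<longrightarrow> price_step_parameters m d R wl wh B \<gamma> ph"
proof -
  define S where "S = (\<Sum>j<m. d j)"
  define B where "B = max (\<Sum>j<m. 1 / p1 j) (2 * real m ^ 2 * R * (1 + 4 * R^2) * S / wl)"
  define ph where "ph = (\<Sum>j<m. p1 j + wh / d j) + wh / (8 * R^2 * S)"
  have "0 < S"
    unfolding S_def using m d by (intro sum_pos) auto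
  have "0 < (\<Sum>j<m. 1 / p1 j)"
    using m p1 by (intro sum_pos) auto
  then have "0 < B"
    by (simp add: B_def max.strict_coboundedI1)
  have "2 * real m ^ 2 * R * (1 + 4 * R^2) * S / wl \<le> B"
    by (simp add: B_def)
  then have B_large: "2 * real m ^ 2 * R * (1 + 4 * R^2) * S \<le> wl * B"
    using w by (simp add: pos_divide_le_eq mult.commute)
  have "0 \<le> p1 k + wh / d k" if "k < m" for k
    using p1 d w that by (simp add: add_nonneg_nonneg less_imp_le)
  then have sum_ge: "p1 j + wh / d j \<le> (\<Sum>k<m. p1 k + wh / d k)" if "j < m" for j
    using that by (intro member_le_sum) auto
  have ph_ge: "p1 j \<le> ph \<and> wh / d j + wh / (8 * R^2 * S) \<le> ph" if "j < m" for j
  proof -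
    have "0 < p1 j" "0 \<le> wh / d j" "0 \<le> wh / (8 * R^2 * S)"
      using p1 d w that \<open>0 < S\<close> by auto
    then show ?thesis
      using sum_ge[OF that] unfolding ph_def by linarith
  qed
  show thesis
  proof (rule that)
    show "0 < 1 / (8 * B * R^2 * S)"
      using \<open>0 < B\<close> R \<open>0 < S\<close> by simp
    show "price_bounds m B ph p1"
      using p1 ph_ge by (auto simp: price_bounds_def B_def)
    show "\<forall>\<gamma>. 0 \<le> \<gamma> \<and> \<gamma> \<le> 1 / (8 * B * R^2 * S) \<longrightarrow> price_step_parameters m d R wl wh B \<gamma> ph"
      using m d R w B_large ph_ge
      by (auto intro!: price_step_parameters_if_small_step simp: S_def)
  qed
qed

lemma utility_ratio_le:
  fixes u ul uh :: "nat \<Rightarrow> real"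
  assumes ul: "\<forall>j<m. 0 < ul j" and u: "\<forall>j<m. ul j \<le> u j \<and> u j \<le> uh j"
    and R: "(\<Sum>k<m. uh k) * (\<Sum>k<m. 1 / ul k) \<le> R"
    and i: "i < m" and j: "j < m"
  shows "u i \<le> R * u j"
proof -
  have "0 \<le> 1 / ul k" "0 \<le> uh k" if "k < m" for k
    using ul u that by (fastforce simp: less_imp_le)+
  have "0 \<le> u j"
    using ul u j by fastforce
  have "1 \<le> 1 / ul j * u j"
    using ul u j by (simp add: field_simps)
  also have "\<dots> \<le> (\<Sum>k<m. 1 / ul k) * u j"
    using j \<open>0 \<le> u j\<close> \<open>\<And>k. k < m \<Longrightarrow> 0 \<le> 1 / ul k\<close>
    by (intro mult_right_mono member_le_sum) auto
  finally have one_le: "1 \<le> (\<Sum>k<m. 1 / ul k) * u j" .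
  have "u i \<le> uh i"
    using u i by blast
  also have "\<dots> \<le> (\<Sum>k<m. uh k)"
    using i \<open>\<And>k. k < m \<Longrightarrow> 0 \<le> uh k\<close> by (intro member_le_sum) auto
  also have "\<dots> \<le> (\<Sum>k<m. uh k) * ((\<Sum>k<m. 1 / ul k) * u j)"
  proof -
    have "0 \<le> (\<Sum>k<m. uh k)"
      using \<open>\<And>k. k < m \<Longrightarrow> 0 \<le> uh k\<close> by (intro sum_nonneg) auto
    then show ?thesis
      using mult_left_mono[OF one_le] by fastforce
  qed
  also have "\<dots> \<le> R * u j"
    using mult_right_mono[OF R \<open>0 \<le> u j\<close>] by (simp add: mult.assoc)
  finally show ?thesis .
qed

lemma AE_user_bounds:
  fixes D :: "(real \<times> (nat \<Rightarrow> real)) measure"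
  assumes ul: "\<forall>j<m. 0 < ul j"
    and support: "AE z in D. wl \<le> fst z \<and> fst z \<le> wh \<and> (\<forall>j<m. ul j \<le> snd z j \<and> snd z j \<le> uh j)"
    and R: "(\<Sum>k<m. uh k) * (\<Sum>k<m. 1 / ul k) \<le> R"
  shows "AE z in D. wl \<le> fst z \<and> fst z \<le> wh \<and> (\<forall>j<m. 0 < snd z j) \<and>
                    (\<forall>i<m. \<forall>j<m. snd z i \<le> R * snd z j)"
  using support
proof eventually_elim
  case (elim z)
  then show ?case
    using ul utility_ratio_le[of m ul "snd z" uh R] R by force
qed

theorem lemma7:
  fixes m :: nat
    and d :: "nat \<Rightarrow> real"
    and p1 :: "nat \<Rightarrow> real"
    and D :: "(real \<times> (nat \<Rightarrow> real)) measure"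
    and ul uh :: "nat \<Rightarrow> real"
    and wl wh :: real
  assumes d_pos: "\<forall>j<m. 0 < d j"
    and p1_pos: "\<forall>j<m. 0 < p1 j"
    and prob: "prob_space D"
    and pos_prob: "\<forall>j<m. {z \<in> space D. 0 < snd z j} \<in> sets D \<and>
                          0 < measure D {z \<in> space D. 0 < snd z j}"
    and ul_pos: "\<forall>j<m. 0 < ul j \<and> ul j \<le> uh j"
    and wl_pos: "0 < wl" "wl \<le> wh"
    and support: "AE z in D. wl \<le> fst z \<and> fst z \<le> wh \<and>
                              (\<forall>j<m. ul j \<le> snd z j \<and> snd z j \<le> uh j)"
  shows "\<exists>Dbar > 0. \<exists>pl ph. 0 < pl \<and> pl \<le> ph \<and>
           (\<forall>n \<ge> 1. AE \<omega> in PiM {1..n} (\<lambda>_. D).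
              \<forall>k\<in>{1..n}. \<forall>x p.
                 rp_prefix m d (Dbar / sqrt (real n)) p1 (\<lambda>t. fst (\<omega> t)) (\<lambda>t. snd (\<omega> t)) x p k
                 \<longrightarrow> (\<forall>j<m. pl \<le> p k j \<and> p k j \<le> ph))"
proof (cases "m = 0")
  case True
  then show ?thesis
    by (auto intro!: exI[of _ 1])
next
  case False
  define R where "R = max 1 ((\<Sum>j<m. uh j) * (\<Sum>j<m. 1 / ul j))"
  have "0 < m" "1 \<le> R" "0 \<le> wh"
    using False wl_pos by (auto simp: R_def)
  have users: "AE z in D. wl \<le> fst z \<and> fst z \<le> wh \<and> (\<forall>j<m. 0 < snd z j) \<and>
                          (\<forall>i<m. \<forall>j<m. snd z i \<le> R * snd z j)"
    by (rule AE_user_bounds[OF _ support]) (use ul_pos in \<open>auto simp: R_def\<close>)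
  obtain Dbar B ph where "0 < Dbar" and init: "price_bounds m B ph p1"
    and params: "\<forall>\<gamma>. 0 \<le> \<gamma> \<and> \<gamma> \<le> Dbar \<longrightarrow> price_step_parameters m d R wl wh B \<gamma> ph"
    using exists_price_step_parameters[OF \<open>0 < m\<close> d_pos p1_pos \<open>1 \<le> R\<close> wl_pos(1) \<open>0 \<le> wh\<close>] .
  have "0 \<le> Dbar / sqrt n" "Dbar / sqrt n \<le> Dbar" if "1 \<le> n" for n :: nat
    using that \<open>0 < Dbar\<close> by (auto simp: divide_le_eq)
  then have "\<forall>n \<ge> 1. AE \<omega> in PiM {1..n} (\<lambda>_. D). \<forall>k\<in>{1..n}. \<forall>x p.
      rp_prefix m d (Dbar / sqrt (real n)) p1 (\<lambda>t. fst (\<omega> t)) (\<lambda>t. snd (\<omega> t)) x p k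
      \<longrightarrow> (\<forall>j<m. 1 / B \<le> p k j \<and> p k j \<le> ph)"
    using params price_step_parameters.AE_price_bounds[OF _ prob users init] by blast
  then show ?thesis
    using \<open>0 < Dbar\<close> price_bounds_inverse_bound[OF init \<open>0 < m\<close>] by blast
qed

end
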